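(* Let $m,n$ be positive integers. The multigraph $\mathcal{M}_{m,n}$ admits a generating knight's tour if and only if none of the following hold: (i) $m$ and $n$ are both even; (ii) $m\in\{1,2,4\}$; (iii) $m=3$ and $n\in\{1,2,4\}$; (iv) $m=5$ and $n=1$.
   Context: For a positive integer $m$, let $\mathcal{S}_m$ be the graph with vertex set $\{(a,b)\in\mathbb{Z}^2 : 0\le a<m\}$, where $(a,b)$ and $(a',b')$ are joined by an edge iff $\{|a-a'|,|b-b'|\}=\{1,2\}$. For a positive integer $n$, the map $\sigma(a,b)=(m-1-a,\,b+n)$ is a graph automorphism of $\mathcal{S}_m$ generating a free $\mathbb{Z}$-action; the knight's multigraph of the $m\times n$ Möbius strip board is the quotient $\mathcal{M}_{m,n}=\mathcal{S}_m/\langle\sigma\rangle$ (vertices and edges are orbits; multiple edges and loops may occur), and the quotient map $\phi_M:\mathcal{S}_m\to\mathcal{M}_{m,n}$ is a covering map. A knight's tour is a closed walk visiting every vertex exactly once apart from the repeated start/end vertex (a Hamiltonian cycle). Regard a tour as a closed walk starting and ending at the vertex $(0,0)$; it lifts uniquely to a walk in $\mathcal{S}_m$ starting at $(0,0)$. The tour is generating if this lift ends at $(m-1,n)$ or at $(m-1,-n)$ (equivalently, the corresponding closed curve represents a generator of the fundamental group $\cong\mathbb{Z}$ of the Möbius strip). *)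

theory Defs
  imports Main
begin

definition in_strip :: "nat \<Rightarrow> int \<times> int \<Rightarrow> bool" where
  "in_strip m p \<longleftrightarrow> 0 \<le> fst p \<and> fst p < int m"

definition knight_adj :: "int \<times> int \<Rightarrow> int \<times> int \<Rightarrow> bool" where
  "knight_adj p q \<longleftrightarrow> {\<bar>fst p - fst q\<bar>, \<bar>snd p - snd q\<bar>} = {1, 2}"

definition sigma :: "nat \<Rightarrow> nat \<Rightarrow> int \<times> int \<Rightarrow> int \<times> int" where
  "sigma m n p = (int m - 1 - fst p, snd p + int n)"

text \<open>Two points of S_m lie in the same orbit of the Z-action generated by sigma,
  i.e. they represent the same vertex of the Moebius knight's multigraph M_{m,n}.\<close>

definition same_orbit :: "nat \<Rightarrow> nat \<Rightarrow> int \<times> int \<Rightarrow> int \<times> int \<Rightarrow> bool" where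
  "same_orbit m n p q \<longleftrightarrow> (\<exists>k::nat. q = (sigma m n ^^ k) p \<or> p = (sigma m n ^^ k) q)"

text \<open>Lift of a knight's tour of M_{m,n} (Hamiltonian closed walk based at the vertex of (0,0)):
  by the covering property, closed walks of length N in M_{m,n} starting at the vertex
  of (0,0) correspond bijectively to knight walks p 0, ..., p N in S_m with p 0 = (0,0)
  whose endpoint p N lies in the orbit of (0,0).  The walk is a tour iff the vertices
  (orbits) of p 0, ..., p (N-1) are pairwise distinct and exhaust all vertices.\<close>

definition mobius_tour_lift :: "nat \<Rightarrow> nat \<Rightarrow> (nat \<Rightarrow> int \<times> int) \<Rightarrow> nat \<Rightarrow> bool" where
  "mobius_tour_lift m n p N \<longleftrightarrow>
     p 0 = (0, 0) \<and>
     (\<forall>i\<le>N. in_strip m (p i)) \<and>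
     (\<forall>i<N. knight_adj (p i) (p (Suc i))) \<and>
     same_orbit m n (p N) (p 0) \<and>
     (\<forall>i<N. \<forall>j<N. i \<noteq> j \<longrightarrow> \<not> same_orbit m n (p i) (p j)) \<and>
     (\<forall>q. in_strip m q \<longrightarrow> (\<exists>i<N. same_orbit m n (p i) q))"

definition generating_tour :: "nat \<Rightarrow> nat \<Rightarrow> (nat \<Rightarrow> int \<times> int) \<Rightarrow> nat \<Rightarrow> bool" where
  "generating_tour m n p N \<longleftrightarrow>
     mobius_tour_lift m n p N \<and> (p N = (int m - 1, int n) \<or> p N = (int m - 1, - int n))"

end

(*
  A generating tour is the same as a knight's path in the strip that starts at (0, 0), meets
  every orbit of sigma exactly once, and ends one knight move before sigma (0, 0) = (m - 1, n).

  For odd m, sigma preserves the parity of the first coordinate, so the zigzag block of points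
  (a, b) with 2 (a mod 2) <= b < 2 (a mod 2) + n meets every orbit exactly once.  Suitable paths
  through zigzag blocks are assembled from finitely many explicit ones by stacking blocks and by
  gluing a block, or its mirror image under a |-> m - 1 - a, to the side of another.  For odd n
  and m >= 6 one uses instead that sigma for the m x n board is the n-th power of sigma for the
  m x 1 board, and concatenates n translates of an explicit path for the latter.  The boards
  3 x 3 and 5 x 3 are done by hand.

  Conversely, a knight move changes the colour a + b mod 2 and the tour has mn moves, which rules
  out m and n both even.  For m = 1 no move is possible and for m = 2 the knight alternates
  between the two columns.  For m = 4 the knight cannot visit the outer columns a = 0, 3 twice in a
  row, so its 2n visits there occupy the even times before 4n - 1; but for odd n the orbit of
  (0, 1) lies in the outer columns and has odd colour.  The boards 3 x 1, 3 x 2, 3 x 4 and 5 x 1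
  are excluded by exhaustive search.
*)

theory Submission
  imports Defs "HOL-Library.Product_Plus"
begin

section \<open>Knight moves and Hamiltonian paths\<close>

lemma knight_adj_iff:
  "knight_adj p q \<longleftrightarrow>
     \<bar>fst p - fst q\<bar> = 1 \<and> \<bar>snd p - snd q\<bar> = 2 \<or> \<bar>fst p - fst q\<bar> = 2 \<and> \<bar>snd p - snd q\<bar> = 1"
  unfolding knight_adj_def by (auto simp: doubleton_eq_iff)

lemma knight_adj_commute: "knight_adj p q \<longleftrightarrow> knight_adj q p"
  unfolding knight_adj_iff by (simp add: abs_minus_commute)

lemma knight_adj_add_right [simp]: "knight_adj (p + v) (q + v) \<longleftrightarrow> knight_adj p q"
  by (simp add: knight_adj_iff)

lemma knight_adj_colour: "knight_adj p q \<Longrightarrow> even (fst p + snd p) \<longleftrightarrow> odd (fst q + snd q)"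
  unfolding knight_adj_iff abs_eq_iff by presburger

definition knight_moves :: "(int \<times> int) list" where
  "knight_moves = [(1, 2), (2, 1), (-1, 2), (-2, 1), (1, -2), (2, -1), (-1, -2), (-2, -1)]"

lemma knight_adj_iff_move: "knight_adj p q \<longleftrightarrow> q - p \<in> set knight_moves"
proof -
  have abs: "\<bar>z\<bar> = c \<longleftrightarrow> z = c \<or> z = - c" if "c \<in> {1, 2}" for z c :: int
    using that by auto
  have moves: "\<bar>x\<bar> = 1 \<and> \<bar>y\<bar> = 2 \<or> \<bar>x\<bar> = 2 \<and> \<bar>y\<bar> = 1 \<longleftrightarrow> (x, y) \<in> set knight_moves"
    for x y :: int
    unfolding knight_moves_def by (simp add: abs) blast
  obtain a b c d where pq: "p = (a, b)" "q = (c, d)"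
    by fastforce
  then have "knight_adj p q \<longleftrightarrow> \<bar>c - a\<bar> = 1 \<and> \<bar>d - b\<bar> = 2 \<or> \<bar>c - a\<bar> = 2 \<and> \<bar>d - b\<bar> = 1"
    by (simp add: knight_adj_iff abs_minus_commute)
  also have "\<dots> \<longleftrightarrow> q - p \<in> set knight_moves"
    using pq moves by simp
  finally show ?thesis .
qed

definition ham_path :: "('a \<Rightarrow> 'a \<Rightarrow> bool) \<Rightarrow> 'a set \<Rightarrow> 'a \<Rightarrow> 'a \<Rightarrow> bool" where
  "ham_path R S s e \<longleftrightarrow>
     (\<exists>L. L \<noteq> [] \<and> distinct L \<and> set L = S \<and> hd L = s \<and> last L = e \<and> successively R L)"

lemma ham_path_set:
  "L \<noteq> [] \<Longrightarrow> distinct L \<Longrightarrow> successively R L \<Longrightarrow> ham_path R (set L) (hd L) (last L)"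
  unfolding ham_path_def by blast

lemma ham_pathI:
  assumes "L \<noteq> []" "distinct L" "length L = card S" "finite S" "set L \<subseteq> S" "successively R L"
  shows "ham_path R S (hd L) (last L)"
proof -
  have "set L = S"
    using card_subset_eq[OF assms(4,5)] assms(2,3) by (simp add: distinct_card)
  then show ?thesis unfolding ham_path_def using assms by blast
qed

lemma ham_path_append:
  assumes "ham_path R S s e" "ham_path R S' s' e'" "S \<inter> S' = {}" "R e s'"
  shows "ham_path R (S \<union> S') s e'"
proof -
  obtain L where L: "L \<noteq> []" "distinct L" "set L = S" "hd L = s" "last L = e" "successively R L"
    using assms(1) unfolding ham_path_def by blast
  obtain L' where L': "L' \<noteq> []" "distinct L'" "set L' = S'" "hd L' = s'" "last L' = e'"
      "successively R L'"
    using assms(2) unfolding ham_path_def by blast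
  show ?thesis unfolding ham_path_def
    by (rule exI[of _ "L @ L'"]) (use L L' assms(3,4) in \<open>auto simp: successively_append_iff\<close>)
qed

lemma ham_path_image:
  assumes "ham_path R S s e" "inj_on f S" "\<And>x y. R x y \<Longrightarrow> R (f x) (f y)"
  shows "ham_path R (f ` S) (f s) (f e)"
proof -
  obtain L where L: "L \<noteq> []" "distinct L" "set L = S" "hd L = s" "last L = e" "successively R L"
    using assms(1) unfolding ham_path_def by blast
  have "successively R (map f L)"
    unfolding successively_map by (rule successively_mono[OF L(6)]) (rule assms(3))
  moreover have "distinct (map f L)"
    using L(2,3) assms(2) by (simp add: distinct_map)
  moreover have "hd (map f L) = f s" "last (map f L) = f e"
    using L(1,4,5) by (simp_all add: hd_map last_map)
  ultimately show ?thesis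
    unfolding ham_path_def using L(1,3) by (intro exI[of _ "map f L"]) simp
qed

lemma successively_upt:
  "(\<And>a. i \<le> a \<Longrightarrow> Suc a < j \<Longrightarrow> R a (Suc a)) \<Longrightarrow> successively R [i..<j]"
  unfolding successively_conv_nth by simp

section \<open>Orbits of the deck transformation\<close>

definition sigma_iter :: "nat \<Rightarrow> nat \<Rightarrow> int \<Rightarrow> int \<times> int \<Rightarrow> int \<times> int" where
  "sigma_iter m n k p = (if even k then fst p else int m - 1 - fst p, snd p + k * int n)"

lemma sigma_iter_0 [simp]: "sigma_iter m n 0 p = p"
  by (simp add: sigma_iter_def)

lemma sigma_iter_add: "sigma_iter m n k (sigma_iter m n j p) = sigma_iter m n (k + j) p"
  by (auto simp: sigma_iter_def algebra_simps)

lemma funpow_sigma: "(sigma m n ^^ k) p = sigma_iter m n (int k) p"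
proof (induction k arbitrary: p)
  case (Suc k)
  have "sigma m n q = sigma_iter m n 1 q" for q
    by (simp add: sigma_def sigma_iter_def)
  then show ?case
    using Suc.IH by (simp add: sigma_iter_add add.commute)
qed simp

lemma sigma_iter_inverse [simp]: "sigma_iter m n (- k) (sigma_iter m n k p) = p"
  by (simp add: sigma_iter_add)

lemma same_orbit_iff: "same_orbit m n p q \<longleftrightarrow> (\<exists>k. q = sigma_iter m n k p)"
proof
  assume "same_orbit m n p q"
  then obtain k where "q = sigma_iter m n (int k) p \<or> p = sigma_iter m n (int k) q"
    unfolding same_orbit_def funpow_sigma by blast
  then show "\<exists>k. q = sigma_iter m n k p"
  proof
    assume "p = sigma_iter m n (int k) q"
    then have "q = sigma_iter m n (- int k) p" by simp
    then show ?thesis ..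
  qed blast
next
  assume "\<exists>k. q = sigma_iter m n k p"
  then obtain k where k: "q = sigma_iter m n k p" by blast
  show "same_orbit m n p q"
  proof (cases "0 \<le> k")
    case True
    then have "q = sigma_iter m n (int (nat k)) p"
      using k by simp
    then show ?thesis unfolding same_orbit_def funpow_sigma by blast
  next
    case False
    then have "p = sigma_iter m n (int (nat (- k))) q"
      using k by simp
    then show ?thesis unfolding same_orbit_def funpow_sigma by blast
  qed
qed

lemma sigma_iter_eq_self_iff: "0 < n \<Longrightarrow> sigma_iter m n k p = p \<longleftrightarrow> k = 0"
  by (auto simp: sigma_iter_def prod_eq_iff)

lemma inj_sigma_iter: "inj (sigma_iter m n k)"
  by (rule inj_on_inverseI[of _ "sigma_iter m n (- k)"]) simp

lemma knight_adj_sigma_iter [simp]: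
  "knight_adj (sigma_iter m n k p) (sigma_iter m n k q) \<longleftrightarrow> knight_adj p q"
  unfolding knight_adj_iff sigma_iter_def by (cases "even k") (simp_all add: abs_minus_commute)

lemma in_strip_sigma_iter [simp]: "in_strip m (sigma_iter m n k p) \<longleftrightarrow> in_strip m p"
  by (auto simp: in_strip_def sigma_iter_def)

lemma sigma_iter_odd: "odd n \<Longrightarrow> sigma_iter m n t = sigma_iter m 1 (t * int n)"
  by (simp add: sigma_iter_def fun_eq_iff)

definition orbit_rep :: "nat \<Rightarrow> nat \<Rightarrow> int \<times> int \<Rightarrow> int \<times> int" where
  "orbit_rep m n p = sigma_iter m n (- (snd p div int n)) p"

definition rect :: "nat \<Rightarrow> nat \<Rightarrow> (int \<times> int) set" where
  "rect m n = {0..<int m} \<times> {0..<int n}"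

lemma card_rect: "card (rect m n) = m * n"
  by (simp add: rect_def card_cartesian_product)

lemma orbit_rep_sigma_iter: "0 < n \<Longrightarrow> orbit_rep m n (sigma_iter m n k p) = orbit_rep m n p"
  by (simp add: orbit_rep_def sigma_iter_add) (simp add: sigma_iter_def)

lemma sigma_iter_orbit_rep: "sigma_iter m n (snd p div int n) (orbit_rep m n p) = p"
  by (simp add: orbit_rep_def sigma_iter_add)

lemma orbit_rep_eq_iff:
  assumes "0 < n"
  shows "orbit_rep m n p = orbit_rep m n q \<longleftrightarrow> same_orbit m n p q"
proof
  assume rep: "orbit_rep m n p = orbit_rep m n q"
  have "q = sigma_iter m n (snd q div int n) (orbit_rep m n p)"
    unfolding rep sigma_iter_orbit_rep ..
  also have "\<dots> = sigma_iter m n (snd q div int n - snd p div int n) p"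
    by (simp add: orbit_rep_def sigma_iter_add)
  finally show "same_orbit m n p q"
    unfolding same_orbit_iff ..
next
  assume "same_orbit m n p q"
  then show "orbit_rep m n p = orbit_rep m n q"
    unfolding same_orbit_iff using orbit_rep_sigma_iter[OF assms] by metis
qed

lemma orbit_rep_in_rect:
  assumes "0 < n" "in_strip m p"
  shows "orbit_rep m n p \<in> rect m n"
proof -
  have "snd (orbit_rep m n p) = snd p mod int n"
    by (simp add: orbit_rep_def sigma_iter_def minus_div_mult_eq_mod)
  then show ?thesis
    using assms by (auto simp: orbit_rep_def sigma_iter_def rect_def in_strip_def)
qed

lemma orbit_rep_rect: "p \<in> rect m n \<Longrightarrow> orbit_rep m n p = p"
  by (auto simp: orbit_rep_def rect_def)

definition fundamental_domain :: "nat \<Rightarrow> nat \<Rightarrow> (int \<times> int) set \<Rightarrow> bool" where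
  "fundamental_domain m n D \<longleftrightarrow> (\<forall>p\<in>D. in_strip m p) \<and> bij_betw (orbit_rep m n) D (rect m n)"

lemma fundamental_domain_if_inj_on:
  assumes "0 < n" "finite D" "\<forall>p\<in>D. in_strip m p" "card D = m * n" "inj_on (orbit_rep m n) D"
  shows "fundamental_domain m n D"
proof -
  have "orbit_rep m n ` D \<subseteq> rect m n"
    using assms(1,3) orbit_rep_in_rect by blast
  moreover have "card (orbit_rep m n ` D) = card (rect m n)"
    using assms(4,5) by (simp add: card_image card_rect)
  ultimately have "orbit_rep m n ` D = rect m n"
    by (simp add: card_subset_eq rect_def)
  then show ?thesis
    unfolding fundamental_domain_def bij_betw_def using assms(3,5) by blast
qed

lemma fundamental_domainI:
  assumes "0 < n" "finite D" "\<forall>p\<in>D. in_strip m p" "card D = m * n"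
    and "\<And>p k. p \<in> D \<Longrightarrow> sigma_iter m n k p \<in> D \<Longrightarrow> k = 0"
  shows "fundamental_domain m n D"
proof (rule fundamental_domain_if_inj_on[OF assms(1-4)])
  show "inj_on (orbit_rep m n) D"
  proof (rule inj_onI)
    fix p q
    assume "p \<in> D" "q \<in> D" "orbit_rep m n p = orbit_rep m n q"
    then obtain k where "q = sigma_iter m n k p" "sigma_iter m n k p \<in> D"
      unfolding orbit_rep_eq_iff[OF assms(1)] same_orbit_iff by blast
    moreover from this have "k = 0"
      using assms(5) \<open>p \<in> D\<close> by blast
    ultimately show "p = q" by simp
  qed
qed

lemma fundamental_domain_set:
  assumes "0 < n" "distinct (map (orbit_rep m n) L)" "length L = m * n" "list_all (in_strip m) L"
  shows "fundamental_domain m n (set L)"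
  by (rule fundamental_domain_if_inj_on)
    (use assms in \<open>auto simp: distinct_map distinct_card list_all_iff\<close>)

lemma fundamental_domain_card:
  assumes "fundamental_domain m n D"
  shows "finite D" "card D = m * n"
  using assms bij_betw_finite[of "orbit_rep m n" D] bij_betw_same_card[of "orbit_rep m n" D]
  by (auto simp: fundamental_domain_def card_rect rect_def)

lemma fundamental_domain_unique:
  "fundamental_domain m n D \<Longrightarrow> 0 < n \<Longrightarrow> p \<in> D \<Longrightarrow> q \<in> D \<Longrightarrow> same_orbit m n p q \<Longrightarrow> p = q"
  unfolding fundamental_domain_def bij_betw_def by (metis inj_onD orbit_rep_eq_iff)

lemma fundamental_domain_sigma_iter_eq_0:
  assumes "fundamental_domain m n D" "0 < n" "p \<in> D" "sigma_iter m n k p \<in> D"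
  shows "k = 0"
proof -
  have "same_orbit m n p (sigma_iter m n k p)"
    unfolding same_orbit_iff by blast
  then have "sigma_iter m n k p = p"
    using fundamental_domain_unique[OF assms] by simp
  then show ?thesis
    using sigma_iter_eq_self_iff[OF assms(2)] by blast
qed

lemma fundamental_domain_cover:
  assumes "fundamental_domain m n D" "0 < n" "in_strip m q"
  shows "\<exists>p\<in>D. same_orbit m n p q"
proof -
  have "orbit_rep m n q \<in> orbit_rep m n ` D"
    using orbit_rep_in_rect[OF assms(2,3)] assms(1)
    unfolding fundamental_domain_def bij_betw_def by simp
  then obtain p where "p \<in> D" "orbit_rep m n p = orbit_rep m n q"
    by (metis imageE)
  then show ?thesis using orbit_rep_eq_iff[OF assms(2)] by blast
qed

lemma fundamental_domain_nth:
  assumes "fundamental_domain m n (set L)" "0 < n" "distinct L"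
  shows "i < length L \<Longrightarrow> j < length L \<Longrightarrow> same_orbit m n (L ! i) (L ! j) \<Longrightarrow> i = j"
    and "in_strip m q \<Longrightarrow> \<exists>i<length L. same_orbit m n (L ! i) q"
proof -
  show "i = j" if "i < length L" "j < length L" "same_orbit m n (L ! i) (L ! j)"
    using fundamental_domain_unique[OF assms(1,2) nth_mem nth_mem] that assms(3)
    by (simp add: nth_eq_iff_index_eq)
  show "\<exists>i<length L. same_orbit m n (L ! i) q" if q: "in_strip m q"
  proof -
    obtain d where "d \<in> set L" "same_orbit m n d q"
      using fundamental_domain_cover[OF assms(1,2) q] by blast
    then show ?thesis
      by (metis in_set_conv_nth)
  qed
qed

lemma generating_tour_if_ham_path:
  assumes "0 < m" "0 < n" "fundamental_domain m n D" "ham_path knight_adj D (0, 0) e"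
    and "knight_adj e (int m - 1, int n)"
  shows "\<exists>p N. generating_tour m n p N"
proof -
  obtain L where L: "L \<noteq> []" "distinct L" "set L = D" "hd L = (0, 0)" "last L = e"
      "successively knight_adj L"
    using assms(4) unfolding ham_path_def by blast
  define N where "N = length L"
  define p where "p = (!) (L @ [(int m - 1, int n)])"
  have walk: "successively knight_adj (L @ [(int m - 1, int n)])"
    using L assms(5) by (simp add: successively_append_iff)
  have p_L: "p i = L ! i" if "i < N" for i
    using that by (simp add: p_def N_def nth_append)
  have pN: "p N = (int m - 1, int n)"
    by (simp add: p_def N_def)
  note orbits = fundamental_domain_nth[OF assms(3)[folded L(3)] assms(2) L(2), folded N_def]
  have "mobius_tour_lift m n p N"
    unfolding mobius_tour_lift_def
  proof (intro conjI allI impI notI)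
    show "p 0 = (0, 0)"
      using L(1,4) by (simp add: p_def nth_append hd_conv_nth)
    show "in_strip m (p i)" if "i \<le> N" for i
      using that p_L nth_mem[of i L] assms(1,3) pN L(3)
      by (cases "i = N") (auto simp: fundamental_domain_def in_strip_def N_def)
    show "knight_adj (p i) (p (Suc i))" if "i < N" for i
      using successively_nth[OF walk] that by (simp add: p_def N_def)
    show "same_orbit m n (p N) (p 0)"
      unfolding same_orbit_def pN \<open>p 0 = (0, 0)\<close> by (rule exI[of _ 1]) (simp add: sigma_def)
    show False if "i < N" "j < N" "i \<noteq> j" "same_orbit m n (p i) (p j)" for i j
      using that orbits(1)[of i j] p_L by simp
    show "\<exists>i<N. same_orbit m n (p i) q" if "in_strip m q" for q
      using orbits(2)[OF that] p_L by auto
  qed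
  then show ?thesis
    unfolding generating_tour_def using pN by blast
qed

lemma generating_tour_if_list:
  assumes "0 < m" "0 < n" "L \<noteq> []" "hd L = (0, 0)" "distinct (map (orbit_rep m n) L)"
    and "length L = m * n" "list_all (in_strip m) L" "successively knight_adj L"
    and "knight_adj (last L) (int m - 1, int n)"
  shows "\<exists>p N. generating_tour m n p N"
proof -
  have "distinct L"
    using assms(5) unfolding distinct_map by (rule conjunct1)
  then have "ham_path knight_adj (set L) (0, 0) (last L)"
    using ham_path_set[OF assms(3) _ assms(8)] assms(4) by simp
  then show ?thesis
    using generating_tour_if_ham_path[OF assms(1,2) fundamental_domain_set[OF assms(2,5-7)] _ assms(9)]
    by blast
qed

section \<open>Zigzag blocks\<close>

definition zigzag :: "int \<Rightarrow> int \<Rightarrow> int \<Rightarrow> int \<Rightarrow> (int \<times> int) set" where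
  "zigzag r h c w =
     {(a, b). r \<le> a \<and> a < r + h \<and> c + 2 * (a mod 2) \<le> b \<and> b < c + 2 * (a mod 2) + w}"

lemma zigzag_eq_image:
  "zigzag r h c w = (\<lambda>(a, j). (a, c + 2 * (a mod 2) + j)) ` ({r..<r + h} \<times> {0..<w})"
proof -
  have "zigzag r h c w \<subseteq> (\<lambda>(a, j). (a, c + 2 * (a mod 2) + j)) ` ({r..<r + h} \<times> {0..<w})"
  proof
    fix q assume "q \<in> zigzag r h c w"
    then show "q \<in> (\<lambda>(a, j). (a, c + 2 * (a mod 2) + j)) ` ({r..<r + h} \<times> {0..<w})"
      by (intro image_eqI[of _ _ "(fst q, snd q - c - 2 * (fst q mod 2))"])
        (auto simp: zigzag_def)
  qed
  then show ?thesis by (auto simp: zigzag_def)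
qed

lemma finite_zigzag [simp]: "finite (zigzag r h c w)"
  unfolding zigzag_eq_image by simp

lemma card_zigzag: "card (zigzag r h c w) = nat h * nat w"
proof -
  have "inj_on (\<lambda>(a, j). (a, c + 2 * (a mod 2) + j)) ({r..<r + h} \<times> {0..<w})"
    by (auto simp: inj_on_def)
  then show ?thesis
    unfolding zigzag_eq_image by (simp add: card_image card_cartesian_product)
qed

lemma zigzag_translate:
  assumes "even a"
  shows "(\<lambda>q. q + (a, c)) ` zigzag r h c0 w = zigzag (r + a) h (c0 + c) w"
proof -
  have "(x + a) mod 2 = x mod 2" for x
    using assms by presburger
  then have "zigzag r h c0 w = (\<lambda>q. q + (a, c)) -` zigzag (r + a) h (c0 + c) w"
    by (auto simp: zigzag_def)
  moreover have "surj (\<lambda>q. q + (a, c))"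
    by (rule surjI[of _ "\<lambda>q. q - (a, c)"]) simp
  ultimately show ?thesis
    by (simp add: surj_image_vimage_eq)
qed

definition reflect :: "int \<Rightarrow> int \<times> int \<Rightarrow> int \<times> int" where
  "reflect m p = (m - 1 - fst p, snd p)"

lemma knight_adj_reflect [simp]: "knight_adj (reflect m p) (reflect m q) \<longleftrightarrow> knight_adj p q"
  by (simp add: knight_adj_iff reflect_def abs_minus_commute)

lemma zigzag_reflect:
  assumes "odd h"
  shows "reflect h ` zigzag 0 h c w = zigzag 0 h c w"
proof -
  have "(h - 1 - x) mod 2 = x mod 2" for x
    using assms by presburger
  then have "zigzag 0 h c w = reflect h -` zigzag 0 h c w"
    by (auto simp: zigzag_def reflect_def)
  moreover have "surj (reflect h)"
    by (rule surjI[of _ "reflect h"]) (simp add: reflect_def)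
  ultimately show ?thesis
    by (metis surj_image_vimage_eq)
qed

definition zigzag_path_to :: "int \<Rightarrow> int \<Rightarrow> int \<times> int \<Rightarrow> bool" where
  "zigzag_path_to h w t \<longleftrightarrow>
     (\<exists>e. knight_adj e t \<and> ham_path knight_adj (zigzag 0 h 0 w) (0, 0) e)"

abbreviation zigzag_tour_path :: "int \<Rightarrow> int \<Rightarrow> bool" where
  "zigzag_tour_path h w \<equiv> zigzag_path_to h w (h - 1, w)"

lemma zigzag_path_toI:
  assumes "L \<noteq> []" "hd L = (0, 0)" "distinct L" "length L = nat h * nat w"
    and "list_all (\<lambda>q. q \<in> zigzag 0 h 0 w) L" "successively knight_adj L"
    and "knight_adj (last L) t"
  shows "zigzag_path_to h w t"
proof -
  have "ham_path knight_adj (zigzag 0 h 0 w) (hd L) (last L)"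
    using assms(1,3-6) by (intro ham_pathI) (auto simp: card_zigzag list_all_iff)
  then show ?thesis
    unfolding zigzag_path_to_def using assms(2,7) by metis
qed

lemma zigzag_path_glue:
  assumes "zigzag_path_to h w (g (0, 0))" "zigzag_path_to h' w' t"
    and "inj g" "\<And>p q. knight_adj (g p) (g q) \<longleftrightarrow> knight_adj p q"
    and "zigzag 0 h 0 w \<inter> g ` zigzag 0 h' 0 w' = {}"
    and "zigzag 0 h 0 w \<union> g ` zigzag 0 h' 0 w' = zigzag 0 H 0 W"
  shows "zigzag_path_to H W (g t)"
proof -
  obtain e where e: "knight_adj e (g (0, 0))" "ham_path knight_adj (zigzag 0 h 0 w) (0, 0) e"
    using assms(1) unfolding zigzag_path_to_def by blast
  obtain e' where e': "knight_adj e' t" "ham_path knight_adj (zigzag 0 h' 0 w') (0, 0) e'"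
    using assms(2) unfolding zigzag_path_to_def by blast
  have "ham_path knight_adj (g ` zigzag 0 h' 0 w') (g (0, 0)) (g e')"
    using ham_path_image[OF e'(2) inj_on_subset[OF assms(3) subset_UNIV]] assms(4) by blast
  then have "ham_path knight_adj (zigzag 0 H 0 W) (0, 0) (g e')"
    using ham_path_append[OF e(2) _ assms(5) e(1)] assms(6) by simp
  moreover have "knight_adj (g e') (g t)"
    using e'(1) assms(4) by simp
  ultimately show ?thesis
    unfolding zigzag_path_to_def by blast
qed

lemma zigzag_path_stack:
  assumes "even h" "0 \<le> h" "0 \<le> h'" "zigzag_path_to h w (h, 0)" "zigzag_path_to h' w t"
  shows "zigzag_path_to (h + h') w (t + (h, 0))"
proof (rule zigzag_path_glue[OF _ assms(5)])
  show "zigzag_path_to h w ((0, 0) + (h, 0))"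
    using assms(4) by simp
  show "inj (\<lambda>q. q + (h, 0 :: int))"
    by simp
  have "(\<lambda>q. q + (h, 0)) ` zigzag 0 h' 0 w = zigzag h h' 0 w"
    using zigzag_translate[OF assms(1)] by simp
  then show "zigzag 0 h 0 w \<inter> (\<lambda>q. q + (h, 0)) ` zigzag 0 h' 0 w = {}"
    and "zigzag 0 h 0 w \<union> (\<lambda>q. q + (h, 0)) ` zigzag 0 h' 0 w = zigzag 0 (h + h') 0 w"
    using assms(2,3) by (auto simp: zigzag_def)
qed simp

lemma zigzag_path_beside:
  assumes "0 \<le> w" "0 \<le> w'" "zigzag_path_to h w (0, w)" "zigzag_path_to h w' t"
  shows "zigzag_path_to h (w + w') (t + (0, w))"
proof (rule zigzag_path_glue[OF _ assms(4)])
  show "zigzag_path_to h w ((0, 0) + (0, w))"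
    using assms(3) by simp
  show "inj (\<lambda>q. q + (0 :: int, w))"
    by simp
  have "(\<lambda>q. q + (0, w)) ` zigzag 0 h 0 w' = zigzag 0 h w w'"
    using zigzag_translate[of 0] by simp
  then show "zigzag 0 h 0 w \<inter> (\<lambda>q. q + (0, w)) ` zigzag 0 h 0 w' = {}"
    and "zigzag 0 h 0 w \<union> (\<lambda>q. q + (0, w)) ` zigzag 0 h 0 w' = zigzag 0 h 0 (w + w')"
    using assms(1,2) by (auto simp: zigzag_def)
qed simp

lemma zigzag_path_beside_reflected:
  assumes "odd h" "0 \<le> w" "0 \<le> w'" "zigzag_path_to h w (h - 1, w)" "zigzag_path_to h w' t"
  shows "zigzag_path_to h (w + w') (reflect h t + (0, w))"
proof (rule zigzag_path_glue[OF _ assms(5)])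
  show "zigzag_path_to h w (reflect h (0, 0) + (0, w))"
    using assms(4) by (simp add: reflect_def)
  show "inj (\<lambda>q. reflect h q + (0, w))"
    by (auto simp: inj_def reflect_def prod_eq_iff)
  have "(\<lambda>q. reflect h q + (0, w)) ` zigzag 0 h 0 w' = (\<lambda>q. q + (0, w)) ` reflect h ` zigzag 0 h 0 w'"
    by (simp add: image_image)
  also have "\<dots> = zigzag 0 h w w'"
    using zigzag_translate[of 0 w 0 h 0 w'] by (simp add: zigzag_reflect[OF assms(1)])
  finally show "zigzag 0 h 0 w \<inter> (\<lambda>q. reflect h q + (0, w)) ` zigzag 0 h 0 w' = {}"
    and "zigzag 0 h 0 w \<union> (\<lambda>q. reflect h q + (0, w)) ` zigzag 0 h 0 w' = zigzag 0 h 0 (w + w')"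
    using assms(2,3) by (auto simp: zigzag_def)
qed simp

lemma zigzag_tour_path_add3:
  assumes "odd h" "0 \<le> w1" "0 \<le> w2" "0 \<le> w3"
    and "zigzag_tour_path h w1" "zigzag_tour_path h w2" "zigzag_tour_path h w3"
  shows "zigzag_tour_path h (w1 + w2 + w3)"
proof -
  have "zigzag_path_to h (w1 + w2) (0, w1 + w2)"
    using zigzag_path_beside_reflected[OF assms(1-3,5,6)] by (simp add: reflect_def add.commute)
  from zigzag_path_beside[OF _ assms(4) this assms(7)] show ?thesis
    using assms(2,3) by (simp add: ac_simps)
qed

lemma fundamental_domain_zigzag:
  assumes "odd m" "0 < n"
  shows "fundamental_domain m n (zigzag 0 (int m) 0 (int n))"
proof (rule fundamental_domainI[OF assms(2)])
  show "\<forall>p\<in>zigzag 0 (int m) 0 (int n). in_strip m p"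
    by (auto simp: zigzag_def in_strip_def)
  show "card (zigzag 0 (int m) 0 (int n)) = m * n"
    by (simp add: card_zigzag nat_mult_distrib)
next
  fix p k
  assume p: "p \<in> zigzag 0 (int m) 0 (int n)" and q: "sigma_iter m n k p \<in> zigzag 0 (int m) 0 (int n)"
  have "(int m - 1 - a) mod 2 = a mod 2" for a
    using assms(1) by presburger
  then have "\<bar>k * int n\<bar> < 1 * int n"
    using p q by (cases p) (auto simp: zigzag_def sigma_iter_def split: if_splits)
  then have "\<bar>k\<bar> < 1"
    by (simp only: abs_mult) (use assms(2) in simp)
  then show "k = 0" by simp
qed simp

lemma generating_tour_if_zigzag_tour_path:
  assumes "odd m" "0 < n" "zigzag_tour_path (int m) (int n)"
  shows "\<exists>p N. generating_tour m n p N"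
proof -
  have "0 < m" using assms(1) by (rule odd_pos)
  then show ?thesis
    using assms(3) generating_tour_if_ham_path[OF _ assms(2) fundamental_domain_zigzag[OF assms(1,2)]]
    unfolding zigzag_path_to_def by auto
qed

lemma zigzag_path_4_2: "zigzag_path_to 4 2 (4, 0)"
  by (rule zigzag_path_toI[where L =
      "[(0, 0), (1, 2), (3, 3), (2, 1), (1, 3), (0, 1), (2, 0), (3, 2)]"])
    (simp_all add: zigzag_def knight_adj_iff)

lemma zigzag_path_4_4: "zigzag_path_to 4 4 (4, 0)"
  by (rule zigzag_path_toI[where L =
      "[(0, 0), (1, 2), (3, 3), (2, 1), (0, 2), (1, 4), (3, 5), (2, 3), (1, 5), (0, 3),
      (2, 2), (3, 4), (1, 3), (0, 1), (2, 0), (3, 2)]"])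
    (simp_all add: zigzag_def knight_adj_iff)

lemma zigzag_tour_path_5_2: "zigzag_tour_path 5 2"
  by (rule zigzag_path_toI[where L =
      "[(0, 0), (1, 2), (3, 3), (4, 1), (2, 0), (0, 1), (1, 3), (3, 2), (4, 0), (2, 1)]"])
    (simp_all add: zigzag_def knight_adj_iff)

lemma zigzag_tour_path_5_4: "zigzag_tour_path 5 4"
  by (rule zigzag_path_toI[where L =
      "[(0, 0), (1, 2), (3, 3), (4, 1), (2, 0), (0, 1), (1, 3), (3, 2), (4, 0), (2, 1),
      (0, 2), (1, 4), (3, 5), (4, 3), (2, 2), (0, 3), (1, 5), (3, 4), (4, 2), (2, 3)]"])
    (simp_all add: zigzag_def knight_adj_iff)

lemma zigzag_tour_path_7_2: "zigzag_tour_path 7 2"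
  by (rule zigzag_path_toI[where L =
      "[(0, 0), (1, 2), (3, 3), (2, 1), (1, 3), (0, 1), (2, 0), (3, 2), (5, 3), (6, 1),
      (4, 0), (5, 2), (6, 0), (4, 1)]"])
    (simp_all add: zigzag_def knight_adj_iff)

lemma zigzag_tour_path_7_4: "zigzag_tour_path 7 4"
  by (rule zigzag_path_toI[where L =
      "[(0, 0), (1, 2), (2, 0), (0, 1), (1, 3), (3, 2), (5, 3), (6, 1), (4, 0), (5, 2),
      (6, 0), (4, 1), (6, 2), (5, 4), (3, 3), (2, 1), (0, 2), (1, 4), (3, 5), (2, 3),
      (4, 2), (6, 3), (5, 5), (3, 4), (1, 5), (0, 3), (2, 2), (4, 3)]"])
    (simp_all add: zigzag_def knight_adj_iff)

lemma zigzag_tour_path_5_5: "zigzag_tour_path 5 5"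
  by (rule zigzag_path_toI[where L =
      "[(0, 0), (1, 2), (0, 4), (1, 6), (3, 5), (4, 3), (2, 4), (3, 6), (4, 4), (3, 2),
      (4, 0), (2, 1), (4, 2), (2, 3), (0, 2), (1, 4), (2, 2), (0, 3), (1, 5), (3, 4),
      (1, 3), (0, 1), (2, 0), (4, 1), (3, 3)]"])
    (simp_all add: zigzag_def knight_adj_iff)

lemma zigzag_tour_path_5_7: "zigzag_tour_path 5 7"
  by (rule zigzag_path_toI[where L =
      "[(0, 0), (1, 2), (0, 4), (1, 6), (3, 7), (1, 8), (0, 6), (2, 5), (4, 6), (3, 8),
      (1, 7), (0, 5), (2, 6), (4, 5), (3, 3), (4, 1), (2, 0), (0, 1), (1, 3), (2, 1),
      (4, 0), (3, 2), (4, 4), (3, 6), (2, 4), (0, 3), (1, 5), (3, 4), (4, 2), (2, 3),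
      (0, 2), (1, 4), (2, 2), (4, 3), (3, 5)]"])
    (simp_all add: zigzag_def knight_adj_iff)

lemma zigzag_tour_path_3_5: "zigzag_tour_path 3 5"
  by (rule zigzag_path_toI[where L =
      "[(0, 0), (2, 1), (0, 2), (1, 4), (2, 2), (0, 3), (1, 5), (2, 3), (0, 4), (1, 6),
      (2, 4), (1, 2), (2, 0), (0, 1), (1, 3)]"])
    (simp_all add: zigzag_def knight_adj_iff)

lemma zigzag_tour_path_3_6: "zigzag_tour_path 3 6"
  by (rule zigzag_path_toI[where L =
      "[(0, 0), (2, 1), (0, 2), (1, 4), (2, 2), (0, 3), (1, 5), (2, 3), (0, 4), (1, 6),
      (2, 4), (1, 2), (2, 0), (0, 1), (1, 3), (2, 5), (1, 7), (0, 5)]"])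
    (simp_all add: zigzag_def knight_adj_iff)

lemma zigzag_tour_path_3_7: "zigzag_tour_path 3 7"
  by (rule zigzag_path_toI[where L =
      "[(0, 0), (2, 1), (0, 2), (2, 3), (0, 4), (1, 6), (2, 4), (1, 2), (2, 0), (0, 1),
      (1, 3), (0, 5), (1, 7), (2, 5), (0, 6), (1, 8), (2, 6), (1, 4), (2, 2), (0, 3),
      (1, 5)]"])
    (simp_all add: zigzag_def knight_adj_iff)

lemma zigzag_tour_path_3_8: "zigzag_tour_path 3 8"
  by (rule zigzag_path_toI[where L =
      "[(0, 0), (2, 1), (0, 2), (2, 3), (1, 5), (2, 7), (1, 9), (0, 7), (2, 6), (1, 8),
      (0, 6), (1, 4), (2, 2), (0, 3), (2, 4), (0, 5), (1, 7), (2, 5), (1, 3), (0, 1),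
      (2, 0), (1, 2), (0, 4), (1, 6)]"])
    (simp_all add: zigzag_def knight_adj_iff)

lemma zigzag_tour_path_3_9: "zigzag_tour_path 3 9"
  by (rule zigzag_path_toI[where L =
      "[(0, 0), (2, 1), (0, 2), (2, 3), (1, 5), (0, 3), (2, 2), (1, 4), (2, 6), (1, 8),
      (0, 6), (2, 7), (1, 9), (0, 7), (2, 8), (1, 10), (0, 8), (1, 6), (0, 4), (2, 5),
      (1, 3), (0, 1), (2, 0), (1, 2), (2, 4), (0, 5), (1, 7)]"])
    (simp_all add: zigzag_def knight_adj_iff)

lemma zigzag_tour_path_3_10: "zigzag_tour_path 3 10"
  by (rule zigzag_path_toI[where L =
      "[(0, 0), (2, 1), (0, 2), (2, 3), (1, 5), (0, 3), (2, 2), (1, 4), (2, 6), (1, 8),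
      (0, 6), (2, 7), (1, 9), (0, 7), (2, 8), (1, 10), (0, 8), (1, 6), (0, 4), (2, 5),
      (1, 3), (0, 1), (2, 0), (1, 2), (2, 4), (0, 5), (1, 7), (2, 9), (1, 11), (0, 9)]"])
    (simp_all add: zigzag_def knight_adj_iff)

lemma zigzag_tour_path_3_11: "zigzag_tour_path 3 11"
  by (rule zigzag_path_toI[where L =
      "[(0, 0), (2, 1), (0, 2), (2, 3), (1, 5), (0, 3), (2, 2), (1, 4), (2, 6), (0, 7),
      (1, 9), (2, 7), (0, 8), (1, 10), (2, 8), (0, 9), (1, 11), (2, 9), (1, 7), (0, 5),
      (2, 4), (1, 6), (0, 4), (1, 2), (2, 0), (0, 1), (1, 3), (2, 5), (0, 6), (1, 8),
      (2, 10), (1, 12), (0, 10)]"])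
    (simp_all add: zigzag_def knight_adj_iff)

lemma zigzag_tour_path_3_12: "zigzag_tour_path 3 12"
  by (rule zigzag_path_toI[where L =
      "[(0, 0), (2, 1), (0, 2), (2, 3), (1, 5), (0, 3), (2, 2), (1, 4), (2, 6), (0, 7),
      (2, 8), (1, 10), (0, 8), (1, 6), (0, 4), (2, 5), (1, 3), (0, 1), (2, 0), (1, 2),
      (2, 4), (0, 5), (1, 7), (0, 9), (1, 11), (2, 9), (0, 10), (1, 12), (2, 10), (1, 8),
      (0, 6), (2, 7), (1, 9), (2, 11), (1, 13), (0, 11)]"])
    (simp_all add: zigzag_def knight_adj_iff)

lemma zigzag_tour_path_3_13: "zigzag_tour_path 3 13"
  by (rule zigzag_path_toI[where L =
      "[(0, 0), (2, 1), (0, 2), (2, 3), (1, 5), (0, 3), (2, 2), (1, 4), (2, 6), (0, 7),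
      (2, 8), (1, 6), (0, 4), (2, 5), (1, 3), (0, 1), (2, 0), (1, 2), (2, 4), (0, 5),
      (1, 7), (0, 9), (2, 10), (1, 12), (0, 10), (1, 8), (0, 6), (2, 7), (1, 9), (0, 11),
      (1, 13), (2, 11), (0, 12), (1, 14), (2, 12), (1, 10), (0, 8), (2, 9), (1, 11)]"])
    (simp_all add: zigzag_def knight_adj_iff)

lemma zigzag_tour_path_3_14: "zigzag_tour_path 3 14"
  by (rule zigzag_path_toI[where L =
      "[(0, 0), (2, 1), (0, 2), (2, 3), (1, 5), (0, 3), (2, 2), (1, 4), (2, 6), (0, 7),
      (2, 8), (1, 6), (0, 4), (2, 5), (1, 3), (0, 1), (2, 0), (1, 2), (2, 4), (0, 5),
      (1, 7), (0, 9), (2, 10), (1, 12), (0, 10), (1, 8), (0, 6), (2, 7), (1, 9), (2, 11),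
      (1, 13), (0, 11), (2, 12), (1, 14), (0, 12), (1, 10), (0, 8), (2, 9), (1, 11), (2, 13),
      (1, 15), (0, 13)]"])
    (simp_all add: zigzag_def knight_adj_iff)

lemma int_periodic_induct:
  fixes a d x :: int
  assumes "0 < d" "a \<le> x"
    and base: "\<And>y. a \<le> y \<Longrightarrow> y < a + d \<Longrightarrow> P y"
    and step: "\<And>y. a \<le> y \<Longrightarrow> P y \<Longrightarrow> P (y + d)"
  shows "P x"
proof -
  have "P x" if "a \<le> x" "nat (x - a) = k" for x k
    using that
  proof (induction k arbitrary: x rule: less_induct)
    case (less k)
    show ?case
    proof (cases "x < a + d")
      case True
      then show ?thesis using base less.prems(1) by blast
    next
      case False
      then have "P (x - d)"
        using less.IH[of "nat (x - d - a)" "x - d"] less.prems assms(1) by simp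
      then show ?thesis
        using step[of "x - d"] False by simp
    qed
  qed
  then show ?thesis using assms(2) by blast
qed

lemma zigzag_tour_path_widths_2_4:
  assumes "odd m" "5 \<le> m"
  shows "zigzag_tour_path m 2 \<and> zigzag_tour_path m 4"
proof -
  have stack: "zigzag_tour_path (y + 4) w"
    if "0 \<le> y" "zigzag_tour_path y w" "zigzag_path_to 4 w (4, 0)" for y w
    using zigzag_path_stack[OF _ _ that(1) that(3,2)] by (simp add: add.commute)
  have "odd m \<longrightarrow> zigzag_tour_path m 2 \<and> zigzag_tour_path m 4"
  proof (induction m rule: int_periodic_induct[where a = 5 and d = 4])
    fix y :: int
    assume "5 \<le> y" "y < 5 + 4"
    then have "y = 5 \<or> y = 7 \<or> even y" by presburger
    then show "odd y \<longrightarrow> zigzag_tour_path y 2 \<and> zigzag_tour_path y 4"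
      using zigzag_tour_path_5_2 zigzag_tour_path_5_4 zigzag_tour_path_7_2 zigzag_tour_path_7_4
      by auto
  next
    fix y :: int
    assume "5 \<le> y" "odd y \<longrightarrow> zigzag_tour_path y 2 \<and> zigzag_tour_path y 4"
    then show "odd (y + 4) \<longrightarrow> zigzag_tour_path (y + 4) 2 \<and> zigzag_tour_path (y + 4) 4"
      using stack zigzag_path_4_2 zigzag_path_4_4 by simp
  qed (use assms(2) in simp_all)
  then show ?thesis using assms(1) by blast
qed

lemma zigzag_tour_path_even_width:
  assumes "odd m" "5 \<le> m" "even n" "2 \<le> n"
  shows "zigzag_tour_path m n"
proof -
  have 2: "zigzag_tour_path m 2" and 4: "zigzag_tour_path m 4"
    using zigzag_tour_path_widths_2_4[OF assms(1,2)] by auto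
  have "even n \<longrightarrow> zigzag_tour_path m n"
  proof (induction n rule: int_periodic_induct[where a = 2 and d = 4])
    fix w :: int
    assume "2 \<le> w" "w < 2 + 4"
    then have "w = 2 \<or> w = 4 \<or> odd w" by presburger
    then show "even w \<longrightarrow> zigzag_tour_path m w"
      using 2 4 by auto
  next
    fix w :: int
    assume "2 \<le> w" "even w \<longrightarrow> zigzag_tour_path m w"
    then show "even (w + 4) \<longrightarrow> zigzag_tour_path m (w + 4)"
      using zigzag_tour_path_add3[OF assms(1) _ _ _ _ 2 2, of w] by (simp add: add.commute)
  qed (use assms(4) in simp_all)
  then show ?thesis using assms(3) by blast
qed

lemma zigzag_tour_path_5_odd_width:
  assumes "odd n" "5 \<le> n"
  shows "zigzag_tour_path 5 n"
proof -
  have "odd n \<longrightarrow> zigzag_tour_path 5 n"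
  proof (induction n rule: int_periodic_induct[where a = 5 and d = 4])
    fix w :: int
    assume "5 \<le> w" "w < 5 + 4"
    then have "w = 5 \<or> w = 7 \<or> even w" by presburger
    then show "odd w \<longrightarrow> zigzag_tour_path 5 w"
      using zigzag_tour_path_5_5 zigzag_tour_path_5_7 by auto
  next
    fix w :: int
    assume "5 \<le> w" "odd w \<longrightarrow> zigzag_tour_path 5 w"
    then show "odd (w + 4) \<longrightarrow> zigzag_tour_path 5 (w + 4)"
      using zigzag_tour_path_add3[of 5 w 2 2] zigzag_tour_path_5_2 by (simp add: add.commute)
  qed (use assms(2) in simp_all)
  then show ?thesis using assms(1) by blast
qed

lemma zigzag_tour_path_3:
  assumes "5 \<le> n"
  shows "zigzag_tour_path 3 n"
proof (induction n rule: int_periodic_induct[where a = 5 and d = 10])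
  fix w :: int
  assume "5 \<le> w" "w < 5 + 10"
  then have "w = 5 \<or> w = 6 \<or> w = 7 \<or> w = 8 \<or> w = 9 \<or> w = 10 \<or> w = 11 \<or> w = 12 \<or> w = 13 \<or> w = 14"
    by presburger
  then show "zigzag_tour_path 3 w"
    using zigzag_tour_path_3_5 zigzag_tour_path_3_6 zigzag_tour_path_3_7 zigzag_tour_path_3_8
      zigzag_tour_path_3_9 zigzag_tour_path_3_10 zigzag_tour_path_3_11 zigzag_tour_path_3_12
      zigzag_tour_path_3_13 zigzag_tour_path_3_14
    by auto
next
  fix w :: int
  assume "5 \<le> w" "zigzag_tour_path 3 w"
  then show "zigzag_tour_path 3 (w + 10)"
    using zigzag_tour_path_add3[of 3 w 5 5] zigzag_tour_path_3_5 by (simp add: add.assoc)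
qed (use assms in simp_all)

section \<open>Odd n: translates of a path for the board of width one\<close>

lemma fundamental_domain_translates_disjoint:
  assumes "fundamental_domain m 1 D" "i \<noteq> j"
  shows "sigma_iter m 1 i ` D \<inter> sigma_iter m 1 j ` D = {}"
proof -
  have False if "x \<in> D" "y \<in> D" "sigma_iter m 1 i x = sigma_iter m 1 j y" for x y
  proof -
    have "sigma_iter m 1 (- j + i) x = y"
      using arg_cong[OF that(3), of "sigma_iter m 1 (- j)"] by (simp add: sigma_iter_add)
    then have "- j + i = 0"
      using fundamental_domain_sigma_iter_eq_0[OF assms(1) _ that(1), of "- j + i"] that(2) by simp
    then show False
      using assms(2) by simp
  qed
  then show ?thesis by blast
qed

lemma card_translates:
  assumes "fundamental_domain m 1 D"
  shows "card (\<Union>i<k. sigma_iter m 1 (int i) ` D) = m * k"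
proof -
  have D: "finite D" "card D = m"
    using fundamental_domain_card[OF assms] by auto
  have "card (\<Union>i<k. sigma_iter m 1 (int i) ` D) = (\<Sum>i<k. card (sigma_iter m 1 (int i) ` D))"
  proof (rule card_UN_disjoint)
    show "\<forall>i\<in>{..<k}. \<forall>j\<in>{..<k}. i \<noteq> j \<longrightarrow>
        sigma_iter m 1 (int i) ` D \<inter> sigma_iter m 1 (int j) ` D = {}"
      using fundamental_domain_translates_disjoint[OF assms] by simp
  qed (use D(1) in simp_all)
  also have "\<dots> = (\<Sum>i<k. m)"
    using D(2) by (simp add: card_image inj_on_subset[OF inj_sigma_iter])
  finally show ?thesis
    by simp
qed

lemma fundamental_domain_odd_translates:
  assumes "fundamental_domain m 1 D" "odd k"
  shows "fundamental_domain m k (\<Union>i<k. sigma_iter m 1 (int i) ` D)"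
proof (rule fundamental_domainI)
  show "card (\<Union>i<k. sigma_iter m 1 (int i) ` D) = m * k"
    by (rule card_translates[OF assms(1)])
  show "finite (\<Union>i<k. sigma_iter m 1 (int i) ` D)"
    using fundamental_domain_card(1)[OF assms(1)] by simp
  show "\<forall>p\<in>\<Union>i<k. sigma_iter m 1 (int i) ` D. in_strip m p"
    using assms(1) by (auto simp: fundamental_domain_def)
next
  fix p t
  assume p: "p \<in> (\<Union>i<k. sigma_iter m 1 (int i) ` D)"
    and q: "sigma_iter m k t p \<in> (\<Union>i<k. sigma_iter m 1 (int i) ` D)"
  obtain i x where i: "i < k" "x \<in> D" "p = sigma_iter m 1 (int i) x"
    using p by blast
  have "sigma_iter m k t p = sigma_iter m 1 (t * int k + int i) x"
    using i(3) by (simp add: sigma_iter_odd[OF assms(2)] sigma_iter_add)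
  moreover obtain j where "j < k" "sigma_iter m k t p \<in> sigma_iter m 1 (int j) ` D"
    using q by blast
  ultimately have j: "j < k" "sigma_iter m 1 (t * int k + int i) x \<in> sigma_iter m 1 (int j) ` D"
    by simp_all
  have "t * int k + int i = int j"
  proof (rule ccontr)
    assume "t * int k + int i \<noteq> int j"
    from fundamental_domain_translates_disjoint[OF assms(1) this] i(2) j(2) show False
      by blast
  qed
  then have "t * int k = int j - int i"
    by simp
  then have "\<bar>t * int k\<bar> < int k"
    using i(1) j(1) by (simp only: abs_less_iff) linarith
  then have "\<bar>t\<bar> * int k < 1 * int k"
    by (simp add: abs_mult)
  then show "t = 0"
    using mult_less_cancel_right_pos[of "int k" "\<bar>t\<bar>" 1] assms(2) by auto
qed (use assms(2) odd_pos in blast)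

lemma ham_path_translates:
  assumes "fundamental_domain m 1 D" "ham_path knight_adj D (0, 0) e"
    and "knight_adj e (int m - 1, 1)"
  shows "ham_path knight_adj (\<Union>i<Suc j. sigma_iter m 1 (int i) ` D) (0, 0) (sigma_iter m 1 (int j) e)"
proof (induction j)
  case 0
  show ?case using assms(2) by (simp add: lessThan_Suc)
next
  case (Suc j)
  have "ham_path knight_adj (sigma_iter m 1 (int (Suc j)) ` D)
      (sigma_iter m 1 (int (Suc j)) (0, 0)) (sigma_iter m 1 (int (Suc j)) e)"
    by (rule ham_path_image[OF assms(2) inj_on_subset[OF inj_sigma_iter subset_UNIV]]) simp
  moreover have "sigma_iter m 1 (int (Suc j)) (0, 0) = sigma_iter m 1 (int j) (int m - 1, 1)"
    by (simp add: sigma_iter_def)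
  moreover have "sigma_iter m 1 (int i) ` D \<inter> sigma_iter m 1 (int (Suc j)) ` D = {}" if "i < Suc j" for i
    using fundamental_domain_translates_disjoint[OF assms(1), of "int i" "int (Suc j)"] that by simp
  then have "(\<Union>i<Suc j. sigma_iter m 1 (int i) ` D) \<inter> sigma_iter m 1 (int (Suc j)) ` D = {}"
    by blast
  ultimately have "ham_path knight_adj ((\<Union>i<Suc j. sigma_iter m 1 (int i) ` D) \<union> sigma_iter m 1 (int (Suc j)) ` D)
      (0, 0) (sigma_iter m 1 (int (Suc j)) e)"
    using ham_path_append[OF Suc.IH] assms(3) by simp
  moreover have "(\<Union>i<Suc (Suc j). sigma_iter m 1 (int i) ` D) =
      (\<Union>i<Suc j. sigma_iter m 1 (int i) ` D) \<union> sigma_iter m 1 (int (Suc j)) ` D"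
    by (simp add: lessThan_Suc Un_commute)
  ultimately show ?case by simp
qed

lemma generating_tour_if_width_one_path:
  assumes "0 < m" "fundamental_domain m 1 D" "ham_path knight_adj D (0, 0) e"
    and "knight_adj e (int m - 1, 1)" "odd n"
  shows "\<exists>p N. generating_tour m n p N"
proof -
  obtain j where n: "n = Suc j"
    using odd_pos[OF assms(5)] gr0_implies_Suc by blast
  have "sigma_iter m 1 (int j) (int m - 1, 1) = (int m - 1, int n)"
    using assms(5) n by (simp add: sigma_iter_def)
  then have "knight_adj (sigma_iter m 1 (int j) e) (int m - 1, int n)"
    using assms(4) knight_adj_sigma_iter by metis
  then show ?thesis
    using generating_tour_if_ham_path[OF assms(1) odd_pos[OF assms(5)]
        fundamental_domain_odd_translates[OF assms(2,5)]] ham_path_translates[OF assms(2-4), of j] n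
    by simp
qed

text \<open>A knight's path through one point of every orbit of the board of width one; the points
  (0, 5) and (1, 3) represent (m - 1, 0) and (m - 2, 0).\<close>

definition width_one_path :: "nat \<Rightarrow> (int \<times> int) list" where
  "width_one_path m =
     [(0, 0), (1, 2), (2, 4), (0, 5), (1, 3)] @ map (\<lambda>a. (int a, 2 * int (a mod 2))) [3..<m - 2]"

lemma distinct_orbit_rep_width_one_path:
  assumes "6 \<le> m"
  shows "distinct (map (orbit_rep m 1) (width_one_path m))"
proof -
  have "distinct ([0, 1, 2, int m - 1, int m - 2] @ map int [3..<m - 2])"
    using assms by (auto simp: distinct_map)
  then have "distinct (map (\<lambda>a. (a, 0 :: int)) ([0, 1, 2, int m - 1, int m - 2] @ map int [3..<m - 2]))"
    by (simp only: distinct_map) (simp add: inj_on_def)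
  moreover have "map (orbit_rep m 1) (width_one_path m) =
      map (\<lambda>a. (a, 0)) ([0, 1, 2, int m - 1, int m - 2] @ map int [3..<m - 2])"
    by (simp add: width_one_path_def orbit_rep_def sigma_iter_def)
  ultimately show ?thesis
    by (simp only:)
qed

lemma fundamental_domain_width_one_path:
  assumes "6 \<le> m"
  shows "fundamental_domain m 1 (set (width_one_path m))"
proof (rule fundamental_domain_set[OF _ distinct_orbit_rep_width_one_path[OF assms]])
  show "length (width_one_path m) = m * 1"
    using assms by (simp add: width_one_path_def)
  show "list_all (in_strip m) (width_one_path m)"
    using assms by (auto simp: width_one_path_def in_strip_def list_all_iff)
qed simp

lemma ham_path_width_one_path:
  assumes "6 \<le> m"
  shows "ham_path knight_adj (set (width_one_path m)) (0, 0) (int m - 3, 2 * int ((m - 3) mod 2))"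
proof -
  let ?L = "width_one_path m"
  have "successively knight_adj (map (\<lambda>a. (int a, 2 * int (a mod 2))) [3..<m - 2])"
    unfolding successively_map by (rule successively_upt) (simp add: knight_adj_iff mod2_eq_if)
  moreover have "hd [3..<m - 2] = 3" "[3..<m - 2] \<noteq> []"
    using assms by simp_all
  ultimately have "successively knight_adj ?L"
    by (simp add: width_one_path_def successively_append_iff successively_Cons hd_map knight_adj_iff)
  moreover have "distinct ?L"
    using distinct_orbit_rep_width_one_path[OF assms] unfolding distinct_map by (rule conjunct1)
  moreover have "?L \<noteq> []" "hd ?L = (0, 0)"
    by (simp_all add: width_one_path_def)
  moreover have "last ?L = (int m - 3, 2 * int ((m - 3) mod 2))"
    using assms by (simp add: width_one_path_def last_map of_nat_diff)
  ultimately show ?thesis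
    using ham_path_set by metis
qed

lemma generating_tour_odd_width:
  assumes "6 \<le> m" "odd n"
  shows "\<exists>p N. generating_tour m n p N"
proof (rule generating_tour_if_width_one_path[OF _ fundamental_domain_width_one_path[OF assms(1)]
      ham_path_width_one_path[OF assms(1)] _ assms(2)])
  show "knight_adj (int m - 3, 2 * int ((m - 3) mod 2)) (int m - 1, 1)"
    by (simp add: knight_adj_iff mod2_eq_if)
qed (use assms(1) in simp)

section \<open>Necessary conditions\<close>

text \<open>The list \<open>vis\<close> holds the orbit representatives visited so far; the last
  move is exempt from the check because it returns to the orbit of (0, 0).\<close>

primrec tour_search :: "nat \<Rightarrow> nat \<Rightarrow> nat \<Rightarrow> (int \<times> int) list \<Rightarrow> int \<times> int \<Rightarrow> bool" where
  "tour_search m n 0 vis q \<longleftrightarrow> q = (int m - 1, int n) \<or> q = (int m - 1, - int n)"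
| "tour_search m n (Suc k) vis q \<longleftrightarrow>
     list_ex (\<lambda>d. in_strip m (q + d) \<and> (k = 0 \<or> orbit_rep m n (q + d) \<notin> set vis) \<and>
       tour_search m n k (orbit_rep m n (q + d) # vis) (q + d)) knight_moves"

context
  fixes m n :: nat and p :: "nat \<Rightarrow> int \<times> int" and N :: nat
  assumes tour: "generating_tour m n p N" and n_pos: "0 < n"
begin

lemma tour_start: "p 0 = (0, 0)"
  and tour_in_strip: "i \<le> N \<Longrightarrow> in_strip m (p i)"
  and tour_step: "i < N \<Longrightarrow> knight_adj (p i) (p (Suc i))"
  and tour_end: "p N = (int m - 1, int n) \<or> p N = (int m - 1, - int n)"
  using tour unfolding generating_tour_def mobius_tour_lift_def by auto

lemma tour_cover: "in_strip m q \<Longrightarrow> \<exists>i<N. same_orbit m n (p i) q"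
  using tour unfolding generating_tour_def mobius_tour_lift_def by blast

lemma tour_orbit_rep_bij: "bij_betw (\<lambda>i. orbit_rep m n (p i)) {..<N} (rect m n)"
proof -
  have "inj_on (\<lambda>i. orbit_rep m n (p i)) {..<N}"
    using tour orbit_rep_eq_iff[OF n_pos]
    by (auto simp: inj_on_def generating_tour_def mobius_tour_lift_def)
  moreover have "(\<lambda>i. orbit_rep m n (p i)) ` {..<N} = rect m n"
  proof
    show "(\<lambda>i. orbit_rep m n (p i)) ` {..<N} \<subseteq> rect m n"
    proof (rule image_subsetI)
      fix i assume "i \<in> {..<N}"
      then show "orbit_rep m n (p i) \<in> rect m n"
        using orbit_rep_in_rect[OF n_pos tour_in_strip] by simp
    qed
  next
    show "rect m n \<subseteq> (\<lambda>i. orbit_rep m n (p i)) ` {..<N}"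
    proof
      fix q assume q: "q \<in> rect m n"
      then have "in_strip m q"
        by (auto simp: rect_def in_strip_def)
      then obtain i where "i < N" "same_orbit m n (p i) q"
        using tour_cover by blast
      then have "orbit_rep m n (p i) = q"
        using orbit_rep_eq_iff[OF n_pos] orbit_rep_rect[OF q] by metis
      then show "q \<in> (\<lambda>i. orbit_rep m n (p i)) ` {..<N}"
        using \<open>i < N\<close> by blast
    qed
  qed
  ultimately show ?thesis
    unfolding bij_betw_def ..
qed

lemma tour_orbit_rep_inj:
  "i < N \<Longrightarrow> j < N \<Longrightarrow> orbit_rep m n (p i) = orbit_rep m n (p j) \<Longrightarrow> i = j"
  using bij_betw_imp_inj_on[OF tour_orbit_rep_bij] by (auto dest: inj_onD)

lemma tour_count:
  assumes "\<And>x. P (orbit_rep m n x) \<longleftrightarrow> P x"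
  shows "card {i. i < N \<and> P (p i)} = card {x \<in> rect m n. P x}"
proof -
  have "bij_betw (\<lambda>i. orbit_rep m n (p i)) {i \<in> {..<N}. P (p i)} {x \<in> rect m n. P x}"
    by (rule bij_betw_Collect[OF tour_orbit_rep_bij]) (rule assms)
  then show ?thesis
    by (simp add: bij_betw_same_card)
qed

lemma tour_length: "N = m * n"
  using tour_count[of "\<lambda>_. True"] by (simp add: card_rect)

lemma tour_colour: "i \<le> N \<Longrightarrow> even (fst (p i) + snd (p i)) \<longleftrightarrow> even i"
proof (induction i)
  case (Suc i)
  then have "even (fst (p i) + snd (p i)) \<longleftrightarrow> even i"
    by simp
  moreover have "even (fst (p i) + snd (p i)) \<longleftrightarrow> odd (fst (p (Suc i)) + snd (p (Suc i)))"
    using knight_adj_colour tour_step Suc.prems by simp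
  ultimately show ?case
    by simp
qed (simp add: tour_start)

lemma tour_search_complete: "tour_search m n N [(0, 0)] (0, 0)"
proof -
  have "tour_search m n t vis (p j)"
    if "j + t = N" "set vis = (\<lambda>i. orbit_rep m n (p i)) ` {..j}" for t j vis
    using that
  proof (induction t arbitrary: j vis)
    case 0
    then show ?case using tour_end by simp
  next
    case (Suc t)
    let ?q = "p (Suc j)"
    have "?q - p j \<in> set knight_moves"
      using tour_step[of j] Suc.prems(1) knight_adj_iff_move by simp
    moreover have "in_strip m ?q"
      using tour_in_strip Suc.prems(1) by simp
    moreover have "orbit_rep m n ?q \<notin> set vis" if "t \<noteq> 0"
    proof
      assume "orbit_rep m n ?q \<in> set vis"
      then obtain i where "i \<le> j" "orbit_rep m n (p i) = orbit_rep m n ?q"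
        unfolding Suc.prems(2) by auto
      moreover have "Suc j < N"
        using that Suc.prems(1) by simp
      ultimately show False
        using tour_orbit_rep_inj[of i "Suc j"] by simp
    qed
    moreover have "tour_search m n t (orbit_rep m n ?q # vis) ?q"
      using Suc.IH[of "Suc j"] Suc.prems by (simp add: atMost_Suc)
    ultimately show ?case
      unfolding tour_search.simps list_ex_iff by (intro bexI[of _ "?q - p j"]) auto
  qed
  from this[of 0 N "[(0, 0)]"] show ?thesis
    by (simp add: tour_start orbit_rep_def)
qed

end

lemma generating_tour_odd_m_or_n:
  assumes "generating_tour m n p N" "0 < n"
  shows "odd m \<or> odd n"
proof (rule ccontr)
  assume even: "\<not> (odd m \<or> odd n)"
  then have "even (fst (p N) + snd (p N))"
    using tour_colour[OF assms, of N] tour_length[OF assms] by simp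
  moreover have "odd (fst (p N) + snd (p N))"
    using tour_end[OF assms] even by auto
  ultimately show False by simp
qed

lemma no_generating_tour_1:
  assumes "generating_tour 1 n p N" "0 < n"
  shows False
proof -
  have "0 < N"
    using tour_length[OF assms] assms(2) by simp
  then show False
    using tour_step[OF assms, of 0] tour_in_strip[OF assms, of 0] tour_in_strip[OF assms, of 1]
    by (auto simp: knight_adj_iff in_strip_def)
qed

lemma no_generating_tour_2:
  assumes "generating_tour 2 n p N" "0 < n"
  shows False
proof -
  have "i \<le> N \<Longrightarrow> fst (p i) = int (i mod 2)" for i
  proof (induction i)
    case (Suc i)
    then show ?case
      using tour_step[OF assms, of i] tour_in_strip[OF assms, of "Suc i"]
      by (auto simp: knight_adj_iff in_strip_def mod_Suc)
  qed (simp add: tour_start[OF assms])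
  from this[of N] show False
    using tour_end[OF assms] tour_length[OF assms] by auto
qed

lemma card_le_if_no_consecutive:
  fixes J :: "nat set"
  assumes "J \<subseteq> {b..<b + 2 * k}" "\<forall>i\<in>J. Suc i \<notin> J"
  shows "card J \<le> k"
proof -
  have "inj_on (\<lambda>i. (i - b) div 2) J"
  proof (rule inj_onI)
    fix x y
    assume "x \<in> J" "y \<in> J" "(x - b) div 2 = (y - b) div 2"
    moreover from this have "b \<le> x" "b \<le> y"
      using assms(1) by auto
    ultimately have "x = y \<or> y = Suc x \<or> x = Suc y"
      by linarith
    then show "x = y"
      using \<open>x \<in> J\<close> \<open>y \<in> J\<close> assms(2) by blast
  qed
  moreover have "(\<lambda>i. (i - b) div 2) ` J \<subseteq> {..<k}"
  proof
    fix z assume "z \<in> (\<lambda>i. (i - b) div 2) ` J"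
    then obtain i where "i \<in> J" "z = (i - b) div 2"
      by blast
    moreover from this have "b \<le> i" "i < b + 2 * k"
      using assms(1) by auto
    then have "i - b < k * 2"
      by arith
    ultimately show "z \<in> {..<k}"
      by (simp add: div_less_iff_less_mult)
  qed
  ultimately show ?thesis
    using card_inj_on_le[of _ J "{..<k}"] by fastforce
qed

lemma even_diff_if_no_consecutive:
  fixes I :: "nat set"
  assumes "I \<subseteq> {a..<a + 2 * k - 1}" "\<forall>i\<in>I. Suc i \<notin> I" "k \<le> card I" "i \<in> I"
  shows "even (i - a)"
  using assms
proof (induction k arbitrary: a I)
  case 0
  then show ?case by auto
next
  case (Suc k)
  have "a \<in> I"
  proof (rule ccontr)
    assume "a \<notin> I"
    have "I \<subseteq> {Suc a..<Suc a + 2 * k}"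
      using Suc.prems(1) \<open>a \<notin> I\<close> by (auto simp: subset_iff Suc_le_eq order.order_iff_strict)
    then have "card I \<le> k"
      using card_le_if_no_consecutive Suc.prems(2) by blast
    then show False
      using Suc.prems(3) by simp
  qed
  then have "Suc a \<notin> I"
    using Suc.prems(2) by blast
  show ?case
  proof (cases "i = a")
    case False
    have sub: "I - {a} \<subseteq> {a + 2..<(a + 2) + 2 * k - 1}"
    proof
      fix x assume "x \<in> I - {a}"
      then have "a \<le> x" "x < a + 2 * Suc k - 1" "x \<noteq> a" "x \<noteq> Suc a"
        using Suc.prems(1) \<open>Suc a \<notin> I\<close> by auto
      then show "x \<in> {a + 2..<(a + 2) + 2 * k - 1}"
        by simp
    qed
    moreover have "k \<le> card (I - {a})"
      using Suc.prems(1,3) \<open>a \<in> I\<close> finite_subset[OF _ finite_atLeastLessThan] by simp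
    ultimately have "even (i - (a + 2))"
      using Suc.IH[of "I - {a}" "a + 2"] Suc.prems(2,4) False by blast
    moreover have "a + 2 \<le> i"
      using sub Suc.prems(4) False by auto
    ultimately show ?thesis
      by presburger
  qed simp
qed

lemma generating_tour_4_edge_visits:
  assumes "generating_tour 4 n p N" "0 < n"
  shows "card {i. i < N \<and> fst (p i) \<in> {0, 3}} = 2 * n"
proof -
  have "fst (orbit_rep 4 n q) \<in> {0, 3} \<longleftrightarrow> fst q \<in> {0, 3}" for q
    by (auto simp: orbit_rep_def sigma_iter_def)
  then have "card {i. i < N \<and> fst (p i) \<in> {0, 3}} = card {q \<in> rect 4 n. fst q \<in> {0, 3}}"
    by (rule tour_count[OF assms])
  also have "{q \<in> rect 4 n. fst q \<in> {0, 3}} = {0, 3} \<times> {0..<int n}"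
    by (auto simp: rect_def)
  finally show ?thesis
    by (simp add: card_cartesian_product)
qed

lemma generating_tour_4_edge_times:
  assumes tour: "generating_tour 4 n p N" and n_pos: "0 < n"
    and "i < N" "fst (p i) \<in> {0, 3}"
  shows "even i"
proof -
  define edge where "edge q \<longleftrightarrow> fst q \<in> {0, 3}" for q :: "int \<times> int"
  define I where "I = {i. i < N \<and> edge (p i)}"
  have leave_edge: "\<not> edge q" if "knight_adj p' q" "edge p'" "in_strip 4 q" for p' q
    using that by (auto simp: edge_def knight_adj_iff in_strip_def)
  have "\<forall>i\<in>I. Suc i \<notin> I"
  proof (intro ballI notI)
    fix i assume "i \<in> I" "Suc i \<in> I"
    then show False
      using leave_edge[OF tour_step[OF tour n_pos] _ tour_in_strip[OF tour n_pos]] by (auto simp: I_def)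
  qed
  moreover have "I \<subseteq> {0..<0 + 2 * (2 * n) - 1}"
  proof
    fix i assume "i \<in> I"
    have "edge (p N)"
      using tour_end[OF tour n_pos] by (auto simp: edge_def)
    then have "\<not> edge (p (N - 1))"
      using leave_edge[OF _ _ tour_in_strip[OF tour n_pos, of "N - 1"]] knight_adj_commute
        tour_step[OF tour n_pos, of "N - 1"] tour_length[OF tour n_pos] n_pos by fastforce
    then have "i \<noteq> N - 1" "i < N"
      using \<open>i \<in> I\<close> by (auto simp: I_def)
    then show "i \<in> {0..<0 + 2 * (2 * n) - 1}"
      using tour_length[OF tour n_pos] by simp
  qed
  moreover have "card I = 2 * n"
    unfolding I_def edge_def by (rule generating_tour_4_edge_visits[OF tour n_pos])
  ultimately show ?thesis
    using even_diff_if_no_consecutive[of I 0 "2 * n"] assms(3,4) by (simp add: I_def edge_def)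
qed

lemma no_generating_tour_4:
  assumes "generating_tour 4 n p N" "0 < n"
  shows False
proof -
  have "odd n"
    using generating_tour_odd_m_or_n[OF assms] by simp
  obtain i k where "i < N" "p i = sigma_iter 4 n k (0, 1)"
    using tour_cover[OF assms, of "(0, 1)"] unfolding same_orbit_iff
    by (auto simp: in_strip_def) (metis add.left_inverse sigma_iter_0 sigma_iter_add)
  moreover have "fst (sigma_iter 4 n k (0, 1)) \<in> {0, 3}"
    and "odd (fst (sigma_iter 4 n k (0, 1)) + snd (sigma_iter 4 n k (0, 1)))"
    using \<open>odd n\<close> by (auto simp: sigma_iter_def)
  ultimately show False
    using generating_tour_4_edge_times[OF assms] tour_colour[OF assms, of i] by simp
qed

lemma no_tour_search_small:
  "\<not> tour_search 3 1 3 [(0, 0)] (0, 0)" "\<not> tour_search 3 2 6 [(0, 0)] (0, 0)"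
  "\<not> tour_search 3 4 12 [(0, 0)] (0, 0)" "\<not> tour_search 5 1 5 [(0, 0)] (0, 0)"
  by code_simp+

lemma generating_tour_necessary:
  assumes "generating_tour m n p N" "0 < n"
  shows "\<not> (even m \<and> even n) \<and> m \<notin> {1, 2, 4} \<and> \<not> (m = 3 \<and> n \<in> {1, 2, 4}) \<and> \<not> (m = 5 \<and> n = 1)"
proof -
  have "m \<noteq> 1" "m \<noteq> 2" "m \<noteq> 4"
    using no_generating_tour_1 no_generating_tour_2 no_generating_tour_4 assms by blast+
  moreover have "tour_search m n (m * n) [(0, 0)] (0, 0)"
    using tour_search_complete[OF assms] tour_length[OF assms] by simp
  ultimately show ?thesis
    using generating_tour_odd_m_or_n[OF assms] no_tour_search_small by auto
qed

section \<open>Existence of generating tours\<close>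

lemma generating_tour_3_3: "\<exists>p N. generating_tour 3 3 p N"
  by (rule generating_tour_if_list[where L =
      "[(0, 0), (1, 2), (2, 4), (1, 6), (2, 8), (0, 9), (1, 7), (2, 5), (0, 4)]"])
    (simp_all add: orbit_rep_def sigma_iter_def in_strip_def knight_adj_iff)

lemma generating_tour_5_3: "\<exists>p N. generating_tour 5 3 p N"
  by (rule generating_tour_if_list[where L =
      "[(0, 0), (1, 2), (2, 4), (3, 6), (4, 4), (3, 2), (4, 0), (3, -2), (4, -4), (2, -3),
        (0, -2), (1, 0), (0, 2), (1, 4), (2, 2)]"])
    (simp_all add: orbit_rep_def sigma_iter_def in_strip_def knight_adj_iff)

lemma generating_tour_sufficient:
  assumes "0 < m" "0 < n" "\<not> (even m \<and> even n)" "m \<notin> {1, 2, 4}"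
    and "\<not> (m = 3 \<and> n \<in> {1, 2, 4})" "\<not> (m = 5 \<and> n = 1)"
  shows "\<exists>p N. generating_tour m n p N"
proof (cases "odd n")
  case True
  have "6 \<le> m \<or> m \<in> {3, 5} \<and> n = 3 \<or> m = 3 \<and> 5 \<le> n \<or> m = 5 \<and> 5 \<le> n"
    using True assms(1,2,4-6) by (simp only: insert_iff empty_iff) presburger
  then show ?thesis
    using True generating_tour_odd_width generating_tour_3_3 generating_tour_5_3
      generating_tour_if_zigzag_tour_path[of m n] zigzag_tour_path_3[of "int n"]
      zigzag_tour_path_5_odd_width[of "int n"]
    by auto
next
  case False
  then have "odd m" "2 \<le> n"
    using assms(2,3) by presburger+
  moreover have "m = 3 \<and> 5 \<le> n \<or> 5 \<le> m"
    using assms(1,2,4,5) False \<open>odd m\<close> by (simp only: insert_iff empty_iff) presburger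
  ultimately have "zigzag_tour_path (int m) (int n)"
    using False zigzag_tour_path_3[of "int n"] zigzag_tour_path_even_width[of "int m" "int n"] by auto
  then show ?thesis
    using generating_tour_if_zigzag_tour_path \<open>odd m\<close> assms(2) by blast
qed

theorem theorem5p1:
  fixes m n :: nat
  assumes "0 < m" and "0 < n"
  shows "(\<exists>p N. generating_tour m n p N) \<longleftrightarrow>
         \<not> (even m \<and> even n) \<and>
         m \<notin> {1, 2, 4} \<and>
         \<not> (m = 3 \<and> n \<in> {1, 2, 4}) \<and>
         \<not> (m = 5 \<and> n = 1)"
  using generating_tour_necessary[OF _ assms(2)] generating_tour_sufficient[OF assms] by blast

end
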